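(* Let $W$ be a finite set and $\mathtt{N}=\{N_1,\ldots,N_r\}$ a sequence of subsets of $W$. Then $$|K(\mathtt{N})|\simeq\begin{cases}S^{|W|-1}&\text{if }N_1\cup\cdots\cup N_r=W,\\ *&\text{otherwise},\end{cases}$$ where $S^{-1}=\emptyset$. Moreover, if $\mathtt{M}=\{M_1,\ldots,M_r\}$ is a sequence of subsets of $W$ with $M_i\subset N_i$ for all $i$ and $M_1\cup\cdots\cup M_r=W$, then the inclusion $|K(\mathtt{M})|\to|K(\mathtt{N})|$ is a homotopy equivalence.
   Context: For a sequence $\mathtt{N}=\{N_1,\ldots,N_r\}$ of subsets of a finite set $W$ (repetitions allowed), choose distinct points $a_1,\ldots,a_r\notin W$, set $\widetilde{N}_i=N_i\sqcup\{a_i\}$; $K(\mathtt{N})$ is the simplicial complex on $W\sqcup\{a_1,\ldots,a_r\}$ whose minimal non-faces are exactly $\widetilde{N}_1,\ldots,\widetilde{N}_r$ (faces: subsets containing no $\widetilde{N}_i$). $K(\mathtt{M})$ is formed with the same points $a_i$, so $K(\mathtt{M})\subset K(\mathtt{N})$ when $M_i\subset N_i$. $|L|$ denotes geometric realization. *)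

theory Defs
  imports "HOL-Analysis.Analysis"
begin

text \<open>Vertices of K(N): the points of W (tagged Inl) and the extra points a_i = Inr i, i < r,
  where r = length N. The sequence N_1..N_r is the list N.\<close>

definition Kverts :: "'w set \<Rightarrow> 'w set list \<Rightarrow> ('w + nat) set" where
  "Kverts W N = Inl ` W \<union> Inr ` {..<length N}"

definition Ntilde :: "'w set list \<Rightarrow> nat \<Rightarrow> ('w + nat) set" where
  "Ntilde N i = Inl ` (N ! i) \<union> {Inr i}"

definition Kfaces :: "'w set \<Rightarrow> 'w set list \<Rightarrow> ('w + nat) set set" where
  "Kfaces W N = {F. F \<subseteq> Kverts W N \<and> (\<forall>i<length N. \<not> Ntilde N i \<subseteq> F)}"

text \<open>Standard geometric realization of a simplicial complex with (finite) vertex set V and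
  face set K: barycentric-coordinate functions supported on a face, with the
  (product = Euclidean, since V is finite) topology.\<close>
definition realization :: "'v set \<Rightarrow> 'v set set \<Rightarrow> ('v \<Rightarrow> real) set" where
  "realization V K = {x. (\<forall>v. 0 \<le> x v) \<and> (\<forall>v. v \<notin> V \<longrightarrow> x v = 0)
                        \<and> (\<Sum>v\<in>V. x v) = 1 \<and> {v. x v \<noteq> 0} \<in> K}"

definition geom_real :: "'v set \<Rightarrow> 'v set set \<Rightarrow> ('v \<Rightarrow> real) topology" where
  "geom_real V K = subtopology (powertop_real UNIV) (realization V K)"

definition KN_space :: "'w set \<Rightarrow> 'w set list \<Rightarrow> ('w + nat \<Rightarrow> real) topology" where
  "KN_space W N = geom_real (Kverts W N) (Kfaces W N)"

definition sphere_top :: "int \<Rightarrow> (nat \<Rightarrow> real) topology" where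
  "sphere_top d = (if d < 0 then subtopology (powertop_real UNIV) {} else nsphere (nat d))"

definition homotopy_equivalence_map :: "'a topology \<Rightarrow> 'b topology \<Rightarrow> ('a \<Rightarrow> 'b) \<Rightarrow> bool" where
  "homotopy_equivalence_map X Y f \<longleftrightarrow> continuous_map X Y f \<and>
     (\<exists>g. continuous_map Y X g \<and> homotopic_with (\<lambda>h. True) X X (g \<circ> f) id
          \<and> homotopic_with (\<lambda>h. True) Y Y (f \<circ> g) id)"

end

theory Submission
  imports Defs
begin

(* A point w of W lying in no N_i is a cone point of K(N): adding w to a face gives a face, so
   the straight-line homotopy to the vertex w contracts |K(N)|.
   If M_i \<subseteq> N_i and the M_i cover W, moving mass from the points of W to the points a_i
   deforms |K(N)| into |K(M)| while keeping |K(M)| inside itself, so the inclusion is a homotopy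
   equivalence.
   For the covering case this reduces K(N) to K(W, ..., W), whose only non-faces contain some
   W \<union> {a_i}; collapsing all a_i onto a_0 deforms it onto the boundary of the simplex spanned by
   W \<union> {a_0}, and radial projection from the barycentre identifies that boundary with S^(|W|-1). *)

section \<open>Geometric realizations\<close>

lemma topspace_geom_real [simp]: "topspace (geom_real V K) = realization V K"
  by (simp add: geom_real_def)

lemma realizationI:
  assumes "\<And>v. 0 \<le> x v" "\<And>v. v \<notin> V \<Longrightarrow> x v = 0" "sum x V = 1" "{v. x v \<noteq> 0} \<in> K"
  shows "x \<in> realization V K"
  using assms by (auto simp: realization_def)

lemma realizationD:
  assumes "x \<in> realization V K"
  shows "0 \<le> x v" "v \<notin> V \<Longrightarrow> x v = 0" "sum x V = 1" "{v. x v \<noteq> 0} \<in> K"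
  using assms by (auto simp: realization_def)

lemma realization_mono: "K \<subseteq> K' \<Longrightarrow> realization V K \<subseteq> realization V K'"
  unfolding realization_def by blast

lemma realization_convex_combination:
  assumes x: "x \<in> realization V K" and y: "y \<in> realization V K" and t: "0 \<le> t" "t \<le> 1"
    and down: "\<And>F G. F \<in> K \<Longrightarrow> G \<subseteq> F \<Longrightarrow> G \<in> K"
    and face: "{v. x v \<noteq> 0} \<union> {v. y v \<noteq> 0} \<in> K"
  shows "(\<lambda>v. (1 - t) * x v + t * y v) \<in> realization V K"
proof (rule realizationI)
  show "0 \<le> (1 - t) * x v + t * y v" for v
    using realizationD(1)[OF x] realizationD(1)[OF y] t by simp
  show "(1 - t) * x v + t * y v = 0" if "v \<notin> V" for v
    using realizationD(2)[OF x that] realizationD(2)[OF y that] by simp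
  show "(\<Sum>v\<in>V. (1 - t) * x v + t * y v) = 1"
    using realizationD(3)[OF x] realizationD(3)[OF y]
    by (simp add: sum.distrib sum_distrib_left[symmetric])
  show "{v. (1 - t) * x v + t * y v \<noteq> 0} \<in> K"
    by (rule down[OF face]) auto
qed

lemma continuous_map_geom_real_coordinate:
  "continuous_map (geom_real V K) euclideanreal (\<lambda>x. x v)"
  unfolding geom_real_def
  by (rule continuous_map_from_subtopology) (metis UNIV_I continuous_map_product_projection)

lemma continuous_map_prod_geom_real_coordinate:
  "continuous_map (prod_topology Z (geom_real V K)) euclideanreal (\<lambda>p. snd p v)"
  using continuous_map_compose[OF continuous_map_snd continuous_map_geom_real_coordinate]
  by (simp add: o_def)

lemma continuous_map_prod_subtopology_fst:
  "continuous_map (prod_topology (top_of_set T) Y) euclideanreal fst"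
  using continuous_map_compose[OF continuous_map_fst continuous_map_from_subtopology[OF continuous_map_id]]
  by (simp add: o_def)

lemma continuous_map_into_geom_real:
  assumes "\<And>v. continuous_map Z euclideanreal (\<lambda>p. h p v)"
    and "\<And>p. p \<in> topspace Z \<Longrightarrow> h p \<in> realization V K"
  shows "continuous_map Z (geom_real V K) h"
  unfolding geom_real_def using assms
  by (auto simp: continuous_map_in_subtopology continuous_map_componentwise_UNIV)

lemma homotopic_with_TrueI:
  fixes h :: "real \<times> 'a \<Rightarrow> 'b"
  assumes "continuous_map (prod_topology (top_of_set {0..1}) X) Y h"
    and "\<And>x. x \<in> topspace X \<Longrightarrow> h (0, x) = f x" "\<And>x. x \<in> topspace X \<Longrightarrow> h (1, x) = g x"
  shows "homotopic_with (\<lambda>_. True) X Y f g"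
  by (subst homotopic_with) (use assms in \<open>auto intro!: exI[where x=h]\<close>)

lemma homotopic_with_straight_line_id:
  assumes cont: "\<And>v. continuous_map (geom_real V K) euclideanreal (\<lambda>x. c x v)"
    and mem: "\<And>x t. x \<in> realization V K \<Longrightarrow> 0 \<le> t \<Longrightarrow> t \<le> 1 \<Longrightarrow>
                (\<lambda>v. (1 - t) * c x v + t * x v) \<in> realization V K"
  shows "homotopic_with (\<lambda>_. True) (geom_real V K) (geom_real V K) c id"
proof (rule homotopic_with_TrueI)
  show "continuous_map (prod_topology (top_of_set {0..1}) (geom_real V K)) (geom_real V K)
          (\<lambda>p v. (1 - fst p) * c (snd p) v + fst p * snd p v)"
  proof (rule continuous_map_into_geom_real)
    fix v
    have "continuous_map (prod_topology (top_of_set {0..1}) (geom_real V K)) euclideanreal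
            (\<lambda>p. c (snd p) v)"
      using continuous_map_compose[OF continuous_map_snd cont] by (simp add: o_def)
    then show "continuous_map (prod_topology (top_of_set {0..1}) (geom_real V K)) euclideanreal
                 (\<lambda>p. (1 - fst p) * c (snd p) v + fst p * snd p v)"
      by (intro continuous_intros continuous_map_prod_subtopology_fst
                continuous_map_prod_geom_real_coordinate)
  next
    fix p assume "p \<in> topspace (prod_topology (top_of_set {0..1::real}) (geom_real V K))"
    then show "(\<lambda>v. (1 - fst p) * c (snd p) v + fst p * snd p v) \<in> realization V K"
      using mem[of "snd p" "fst p"] by auto
  qed
qed simp_all

section \<open>The complexes \<open>K(N)\<close>\<close>

abbreviation KN_realization :: "'w set \<Rightarrow> 'w set list \<Rightarrow> ('w + nat \<Rightarrow> real) set" where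
  "KN_realization W N \<equiv> realization (Kverts W N) (Kfaces W N)"

lemma topspace_KN_space [simp]: "topspace (KN_space W N) = KN_realization W N"
  by (simp add: KN_space_def)

lemma finite_Kverts: "finite W \<Longrightarrow> finite (Kverts W N)"
  by (simp add: Kverts_def)

lemma Kverts_eq_if_length_eq: "length M = length N \<Longrightarrow> Kverts W M = Kverts W N"
  by (simp add: Kverts_def)

lemma sum_Kverts:
  assumes "finite W"
  shows "sum x (Kverts W N) = (\<Sum>w\<in>W. x (Inl w)) + (\<Sum>i<length N. x (Inr i))"
proof -
  have "sum x (Kverts W N) = sum x (Inl ` W) + sum x (Inr ` {..<length N})"
    unfolding Kverts_def using assms by (intro sum.union_disjoint) auto
  then show ?thesis
    by (simp add: sum.reindex)
qed

lemma Kfaces_downward_closed: "F \<in> Kfaces W N \<Longrightarrow> G \<subseteq> F \<Longrightarrow> G \<in> Kfaces W N"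
  unfolding Kfaces_def by blast

lemma Kfaces_mono:
  assumes "length M = length N" "\<forall>i<length N. M!i \<subseteq> N!i"
  shows "Kfaces W M \<subseteq> Kfaces W N"
proof
  fix F assume F: "F \<in> Kfaces W M"
  have "Ntilde M i \<subseteq> Ntilde N i" if "i < length N" for i
    using assms that unfolding Ntilde_def by auto
  moreover have "F \<subseteq> Kverts W N" "\<forall>i<length M. \<not> Ntilde M i \<subseteq> F"
    using F Kverts_eq_if_length_eq[OF assms(1)] unfolding Kfaces_def by auto
  ultimately have "\<forall>i<length N. \<not> Ntilde N i \<subseteq> F"
    using assms(1) by (metis order_trans)
  with \<open>F \<subseteq> Kverts W N\<close> show "F \<in> Kfaces W N"
    unfolding Kfaces_def by blast
qed

lemma KN_realization_apex_nonzero: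
  assumes "x \<in> KN_realization W N" "i < length N" "x (Inr i) \<noteq> 0"
  shows "\<exists>w\<in>N!i. x (Inl w) = 0"
  using assms unfolding realization_def Kfaces_def Ntilde_def by auto

definition apex_mass :: "nat \<Rightarrow> ('w + nat \<Rightarrow> real) \<Rightarrow> real" where
  "apex_mass r x = (\<Sum>i<r. x (Inr i))"

lemma apex_mass_nonneg: "x \<in> realization V K \<Longrightarrow> 0 \<le> apex_mass r x"
  unfolding apex_mass_def by (simp add: sum_nonneg realizationD(1))

lemma continuous_map_apex_mass:
  assumes "\<And>v. continuous_map Z euclideanreal (\<lambda>p. x p v)"
  shows "continuous_map Z euclideanreal (\<lambda>p. apex_mass r (x p))"
  unfolding apex_mass_def by (intro continuous_map_sum assms) auto

lemma KN_realization_sum: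
  assumes "finite W" "x \<in> KN_realization W N"
  shows "(\<Sum>w\<in>W. x (Inl w)) + apex_mass (length N) x = 1"
  using realizationD(3)[OF assms(2)] sum_Kverts[OF assms(1), of x N] by (simp add: apex_mass_def)

lemma KN_realization_apex_mass_pos:
  assumes "x \<in> KN_realization W N" "apex_mass (length N) x > 0"
  shows "\<exists>i<length N. \<exists>w\<in>N!i. x (Inl w) = 0"
proof -
  obtain i where "i < length N" "x (Inr i) \<noteq> 0"
    using assms(2) unfolding apex_mass_def by (metis less_irrefl sum.neutral lessThan_iff)
  then show ?thesis
    using KN_realization_apex_nonzero[OF assms(1)] by blast
qed

section \<open>Deformation of \<open>|K(L)|\<close> onto \<open>|K(M)|\<close>\<close>

text \<open>At time \<open>t\<close> every coordinate of \<open>w \<in> W\<close> is lowered by \<open>t s\<close>, where \<open>s\<close> is the total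
  mass of the points \<open>a\<^sub>i\<close>, and clipped at \<open>0\<close>; each \<open>a\<^sub>i\<close> receives the part of \<open>t s\<close> that the
  points of \<open>M\<^sub>i\<close> could not pay. So at \<open>t = 1\<close> a point \<open>a\<^sub>i\<close> in the support forces some
  \<open>w \<in> M\<^sub>i\<close> out of it, and covering \<open>W\<close> by the \<open>M\<^sub>i\<close> keeps the total mass positive.\<close>

definition deform_weights :: "'w set list \<Rightarrow> real \<Rightarrow> ('w + nat \<Rightarrow> real) \<Rightarrow> 'w + nat \<Rightarrow> real" where
  "deform_weights M t x v = (case v of
      Inl w \<Rightarrow> max (x (Inl w) - t * apex_mass (length M) x) 0
    | Inr i \<Rightarrow> if i < length M
               then (1 - t) * x (Inr i) + (\<Sum>w\<in>M!i. max (t * apex_mass (length M) x - x (Inl w)) 0)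
               else 0)"

definition deform :: "'w set \<Rightarrow> 'w set list \<Rightarrow> real \<Rightarrow> ('w + nat \<Rightarrow> real) \<Rightarrow> 'w + nat \<Rightarrow> real" where
  "deform W M t x v = deform_weights M t x v / sum (deform_weights M t x) (Kverts W M)"

lemma deform_weights_Inl [simp]:
  "deform_weights M t x (Inl w) = max (x (Inl w) - t * apex_mass (length M) x) 0"
  by (simp add: deform_weights_def)

lemma deform_weights_Inr [simp]:
  "deform_weights M t x (Inr i) = (if i < length M
     then (1 - t) * x (Inr i) + (\<Sum>w\<in>M!i. max (t * apex_mass (length M) x - x (Inl w)) 0) else 0)"
  by (simp add: deform_weights_def)

context
  fixes W :: "'w set" and M L :: "'w set list" and t :: real and x :: "'w + nat \<Rightarrow> real"
  assumes fin: "finite W" and len: "length L = length M"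
    and LW: "\<forall>i<length M. L!i \<subseteq> W" and MW: "\<forall>i<length M. M!i \<subseteq> W" and cover: "\<Union>(set M) = W"
    and t: "0 \<le> t" "t \<le> 1" and x: "x \<in> KN_realization W L"
begin

lemma deform_weights_nonneg: "0 \<le> deform_weights M t x v"
  using t realizationD(1)[OF x] by (cases v) (auto intro!: add_nonneg_nonneg sum_nonneg)

lemma deform_weights_outside:
  assumes "v \<notin> Kverts W M"
  shows "deform_weights M t x v = 0"
proof (cases v)
  case (Inl w)
  then have "x v = 0"
    using realizationD(2)[OF x] assms Kverts_eq_if_length_eq[OF len] by simp
  then show ?thesis
    using Inl mult_nonneg_nonneg[OF t(1) apex_mass_nonneg[OF x]] by simp
next
  case (Inr i)
  then show ?thesis using assms by (auto simp: Kverts_def)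
qed

lemma apex_mass_le_deform_weights:
  "apex_mass (length M) x \<le> apex_mass (length M) (deform_weights M t x)"
proof -
  let ?s = "apex_mass (length M) x"
  let ?paid = "\<lambda>i. \<Sum>w\<in>M!i. max (t * ?s - x (Inl w)) 0"
  have apex: "apex_mass (length M) (deform_weights M t x) = (1 - t) * ?s + (\<Sum>i<length M. ?paid i)"
    by (simp add: apex_mass_def sum.distrib sum_distrib_left)
  show ?thesis
  proof (cases "?s = 0")
    case True
    have "0 \<le> apex_mass (length M) (deform_weights M t x)"
      unfolding apex_mass_def by (rule sum_nonneg) (rule deform_weights_nonneg)
    then show ?thesis using True by simp
  next
    case False
    then have "?s > 0" using apex_mass_nonneg[OF x, of "length M"] by linarith
    then obtain i w0 where "i < length M" "w0 \<in> L!i" "x (Inl w0) = 0"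
      using KN_realization_apex_mass_pos[OF x] len by auto
    then have "w0 \<in> \<Union>(set M)" using LW cover by auto
    then obtain j where j: "j < length M" "w0 \<in> M!j"
      by (auto simp: in_set_conv_nth)
    have "finite (M!j)" using MW j fin finite_subset by blast
    then have "t * ?s \<le> ?paid j"
      using member_le_sum[OF j(2), of "\<lambda>w. max (t * ?s - x (Inl w)) 0"] \<open>x (Inl w0) = 0\<close> by simp
    also have "\<dots> \<le> (\<Sum>i<length M. ?paid i)"
      by (rule member_le_sum) (use j in \<open>auto intro: sum_nonneg\<close>)
    finally show ?thesis by (simp add: apex algebra_simps)
  qed
qed

lemma sum_deform_weights_pos: "0 < sum (deform_weights M t x) (Kverts W M)"
proof -
  let ?z = "deform_weights M t x" and ?s = "apex_mass (length M) x"
  have split: "sum ?z (Kverts W M) = (\<Sum>w\<in>W. ?z (Inl w)) + apex_mass (length M) ?z"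
    unfolding apex_mass_def by (rule sum_Kverts[OF fin])
  have W_nonneg: "0 \<le> (\<Sum>w\<in>W. ?z (Inl w))"
    using deform_weights_nonneg by (simp add: sum_nonneg)
  show ?thesis
  proof (cases "?s = 0")
    case True
    then have "(\<Sum>w\<in>W. ?z (Inl w)) = (\<Sum>w\<in>W. x (Inl w))"
      using realizationD(1)[OF x] by (intro sum.cong) auto
    then have "(\<Sum>w\<in>W. ?z (Inl w)) = 1"
      using KN_realization_sum[OF fin x] True len by simp
    then show ?thesis
      using split apex_mass_le_deform_weights True by simp
  next
    case False
    then show ?thesis
      using split W_nonneg apex_mass_le_deform_weights apex_mass_nonneg[OF x, of "length M"]
      by linarith
  qed
qed

lemma deform_weights_support_in_Kfaces:
  assumes len': "length L' = length M" and M_sub_L': "\<forall>i<length M. M!i \<subseteq> L'!i"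
    and L_sub_L': "t < 1 \<Longrightarrow> \<forall>i<length M. L!i \<subseteq> L'!i"
  shows "{v. deform_weights M t x v \<noteq> 0} \<in> Kfaces W L'"
proof -
  let ?z = "deform_weights M t x" and ?s = "apex_mass (length M) x"
  have "\<not> Ntilde L' i \<subseteq> {v. ?z v \<noteq> 0}" if i: "i < length M" for i
  proof
    assume sub: "Ntilde L' i \<subseteq> {v. ?z v \<noteq> 0}"
    have "\<exists>w\<in>L'!i. ?z (Inl w) = 0"
    proof (cases "(\<Sum>w\<in>M!i. max (t * ?s - x (Inl w)) 0) = 0")
      case False
      then obtain w where "w \<in> M!i" "max (t * ?s - x (Inl w)) 0 \<noteq> 0"
        by (meson sum.neutral)
      then show ?thesis
        using M_sub_L' i by (intro bexI[of _ w]) (auto simp: max_def split: if_splits)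
    next
      case True
      have "?z (Inr i) \<noteq> 0" using sub by (auto simp: Ntilde_def)
      then have "t < 1" "x (Inr i) \<noteq> 0" using True i t by auto
      then obtain w where "w \<in> L!i" "x (Inl w) = 0"
        using KN_realization_apex_nonzero[OF x] i len by auto
      then show ?thesis
        using L_sub_L'[OF \<open>t < 1\<close>] i mult_nonneg_nonneg[OF t(1) apex_mass_nonneg[OF x, of "length M"]]
        by (intro bexI[of _ w]) auto
    qed
    then show False using sub by (auto simp: Ntilde_def)
  qed
  moreover have "{v. ?z v \<noteq> 0} \<subseteq> Kverts W L'"
    using deform_weights_outside Kverts_eq_if_length_eq[OF len'] by blast
  ultimately show ?thesis
    unfolding Kfaces_def using len' by auto
qed

lemma deform_in_KN_realization:
  assumes "length L' = length M" "\<forall>i<length M. M!i \<subseteq> L'!i"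
    and "t < 1 \<Longrightarrow> \<forall>i<length M. L!i \<subseteq> L'!i"
  shows "deform W M t x \<in> KN_realization W L'"
proof -
  define D where "D = sum (deform_weights M t x) (Kverts W M)"
  have D: "D > 0" using sum_deform_weights_pos by (simp add: D_def)
  have deform: "deform W M t x v = deform_weights M t x v / D" for v
    by (simp add: deform_def D_def)
  have VL': "Kverts W L' = Kverts W M" using assms(1) by (rule Kverts_eq_if_length_eq)
  show ?thesis
  proof (rule realizationI)
    show "0 \<le> deform W M t x v" for v using deform_weights_nonneg D by (simp add: deform)
    show "deform W M t x v = 0" if "v \<notin> Kverts W L'" for v
      using deform_weights_outside that VL' by (simp add: deform)
    show "sum (deform W M t x) (Kverts W L') = 1"
      using D VL' by (simp add: deform sum_divide_distrib[symmetric] D_def)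
    show "{v. deform W M t x v \<noteq> 0} \<in> Kfaces W L'"
      using deform_weights_support_in_Kfaces[OF assms] D by (simp add: deform)
  qed
qed

end

lemma deform_0:
  assumes len: "length L = length M" and x: "x \<in> KN_realization W L"
  shows "deform W M 0 x = x"
proof -
  have "deform_weights M 0 x v = x v" for v
  proof (cases v)
    case (Inl w)
    then show ?thesis using realizationD(1)[OF x, of v] by simp
  next
    case (Inr i)
    show ?thesis
    proof (cases "i < length M")
      case True
      then show ?thesis using Inr realizationD(1)[OF x] by simp
    next
      case False
      then have "v \<notin> Kverts W L" using Inr len by (auto simp: Kverts_def)
      then show ?thesis using False Inr realizationD(2)[OF x] by simp
    qed
  qed
  then have "deform_weights M 0 x = x" ..
  then show ?thesis
    using realizationD(3)[OF x] Kverts_eq_if_length_eq[OF len] by (intro ext) (simp add: deform_def)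
qed

lemma continuous_map_deform_weights:
  assumes "continuous_map Z euclideanreal t" "\<And>v. continuous_map Z euclideanreal (\<lambda>p. x p v)"
  shows "continuous_map Z euclideanreal (\<lambda>p. deform_weights M (t p) (x p) v)"
proof (cases v)
  case (Inl w)
  then show ?thesis
    by (simp, intro continuous_intros assms continuous_map_apex_mass)
next
  case (Inr i)
  have "continuous_map Z euclideanreal
          (\<lambda>p. \<Sum>w\<in>M!i. max (t p * apex_mass (length M) (x p) - x p (Inl w)) 0)"
    by (cases "finite (M!i)") (auto intro!: continuous_intros assms continuous_map_apex_mass)
  then show ?thesis
    using Inr by (auto intro!: continuous_intros assms)
qed

lemma continuous_map_deform_into_KN_space:
  assumes fin: "finite W" and len: "length L = length M" "length L' = length M"
    and LW: "\<forall>i<length M. L!i \<subseteq> W" and L'W: "\<forall>i<length M. L'!i \<subseteq> W"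
    and M_sub_L': "\<forall>i<length M. M!i \<subseteq> L'!i" and cover: "\<Union>(set M) = W"
    and tc: "continuous_map Z euclideanreal t" and xc: "\<And>v. continuous_map Z euclideanreal (\<lambda>p. x p v)"
    and tx: "\<And>p. p \<in> topspace Z \<Longrightarrow> 0 \<le> t p \<and> t p \<le> 1 \<and> x p \<in> KN_realization W L
               \<and> (t p < 1 \<longrightarrow> (\<forall>i<length M. L!i \<subseteq> L'!i))"
  shows "continuous_map Z (KN_space W L') (\<lambda>p. deform W M (t p) (x p))"
proof -
  have MW: "\<forall>i<length M. M!i \<subseteq> W" using M_sub_L' L'W by blast
  note facts = fin len(1) LW MW cover
  have ts: "0 \<le> t p" "t p \<le> 1" "x p \<in> KN_realization W L"
    "t p < 1 \<Longrightarrow> \<forall>i<length M. L!i \<subseteq> L'!i" if "p \<in> topspace Z" for p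
    using tx[OF that] by auto
  show ?thesis
    unfolding KN_space_def
  proof (rule continuous_map_into_geom_real)
    fix v
    show "continuous_map Z euclideanreal (\<lambda>p. deform W M (t p) (x p) v)"
      unfolding deform_def
    proof (intro continuous_map_real_divide continuous_map_sum continuous_map_deform_weights tc xc)
      show "sum (deform_weights M (t p) (x p)) (Kverts W M) \<noteq> 0" if "p \<in> topspace Z" for p
        using sum_deform_weights_pos[OF facts ts(1-3)[OF that]] by linarith
    qed (use finite_Kverts[OF fin] in auto)
  next
    fix p assume "p \<in> topspace Z"
    then show "deform W M (t p) (x p) \<in> KN_realization W L'"
      using ts by (intro deform_in_KN_realization[OF facts _ _ _ len(2) M_sub_L'])
  qed
qed

lemma deform_homotopic_id:
  assumes fin: "finite W" and len: "length L = length M" and LW: "\<forall>i<length M. L!i \<subseteq> W"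
    and M_sub_L: "\<forall>i<length M. M!i \<subseteq> L!i" and cover: "\<Union>(set M) = W"
  shows "homotopic_with (\<lambda>_. True) (KN_space W L) (KN_space W L) (deform W M 1) id"
proof (rule homotopic_with_symD, rule homotopic_with_TrueI)
  show "continuous_map (prod_topology (top_of_set {0..1}) (KN_space W L)) (KN_space W L)
          (\<lambda>p. deform W M (fst p) (snd p))"
  proof (rule continuous_map_deform_into_KN_space[OF fin len len LW LW M_sub_L cover])
    show "continuous_map (prod_topology (top_of_set {0..1}) (KN_space W L)) euclideanreal fst"
      by (rule continuous_map_prod_subtopology_fst)
    show "continuous_map (prod_topology (top_of_set {0..1}) (KN_space W L)) euclideanreal (\<lambda>p. snd p v)" for v
      unfolding KN_space_def by (rule continuous_map_prod_geom_real_coordinate)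
  qed auto
  show "deform W M (fst (0, x)) (snd (0, x)) = id x" if "x \<in> topspace (KN_space W L)" for x
    using deform_0[OF len] that by simp
qed simp

theorem homotopy_equivalence_map_KN_space_inclusion:
  assumes fin: "finite W" and len: "length M = length N" and M_sub_N: "\<forall>i<length N. M!i \<subseteq> N!i"
    and NW: "\<forall>i<length N. N!i \<subseteq> W" and cover: "\<Union>(set M) = W"
  shows "topspace (KN_space W M) \<subseteq> topspace (KN_space W N)
       \<and> homotopy_equivalence_map (KN_space W M) (KN_space W N) id"
proof -
  have MW: "\<forall>i<length M. M!i \<subseteq> W" and NW': "\<forall>i<length M. N!i \<subseteq> W"
    and M_sub_N': "\<forall>i<length M. M!i \<subseteq> N!i"
    using M_sub_N NW len by auto
  have sub: "KN_realization W M \<subseteq> KN_realization W N"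
    using Kverts_eq_if_length_eq[OF len] realization_mono[OF Kfaces_mono[OF len M_sub_N]] by simp
  have incl: "continuous_map (KN_space W M) (KN_space W N) id"
    unfolding KN_space_def
    by (rule continuous_map_into_geom_real) (use sub continuous_map_geom_real_coordinate in auto)
  have retr: "continuous_map (KN_space W N) (KN_space W M) (deform W M 1)"
    by (rule continuous_map_deform_into_KN_space[OF fin len[symmetric] refl NW' MW _ cover])
       (auto simp: KN_space_def continuous_map_geom_real_coordinate)
  have "homotopic_with (\<lambda>_. True) (KN_space W M) (KN_space W M) (deform W M 1 \<circ> id) id"
    using deform_homotopic_id[OF fin refl MW _ cover] by simp
  moreover have "homotopic_with (\<lambda>_. True) (KN_space W N) (KN_space W N) (id \<circ> deform W M 1) id"
    using deform_homotopic_id[OF fin len[symmetric] NW' M_sub_N' cover] by simp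
  ultimately show ?thesis
    unfolding homotopy_equivalence_map_def using sub incl retr by auto
qed

section \<open>A point of \<open>W\<close> outside all \<open>N\<^sub>i\<close> is a cone point\<close>

theorem KN_space_homotopy_equivalent_point:
  fixes W :: "'w set" and N :: "'w set list"
  assumes fin: "finite W" and NW: "\<forall>i<length N. N!i \<subseteq> W" and uncovered: "\<Union>(set N) \<noteq> W"
  shows "KN_space W N homotopy_equivalent_space subtopology euclideanreal {0}"
proof -
  have "\<Union>(set N) \<subseteq> W"
    using NW by (auto simp: in_set_conv_nth) blast
  then obtain w0 where w0: "w0 \<in> W" "w0 \<notin> \<Union>(set N)"
    using uncovered by blast
  have w0_notin: "w0 \<notin> N!i" if "i < length N" for i
    using w0(2) nth_mem[OF that] by blast
  define vertex :: "'w + nat \<Rightarrow> real" where "vertex = (\<lambda>v. if v = Inl w0 then 1 else 0)"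
  have support: "{v. vertex v \<noteq> 0} = {Inl w0}" by (auto simp: vertex_def)
  have w0V: "Inl w0 \<in> Kverts W N" using w0(1) by (simp add: Kverts_def)
  have vertex_in: "vertex \<in> KN_realization W N"
  proof (rule realizationI)
    show "sum vertex (Kverts W N) = 1"
      using w0V finite_Kverts[OF fin] by (simp add: vertex_def sum.delta')
    show "{v. vertex v \<noteq> 0} \<in> Kfaces W N"
      using w0V unfolding support by (auto simp: Kfaces_def Ntilde_def)
    show "0 \<le> vertex v" for v by (simp add: vertex_def)
    show "vertex v = 0" if "v \<notin> Kverts W N" for v using that w0V by (auto simp: vertex_def)
  qed
  have cone: "{v. vertex v \<noteq> 0} \<union> {v. x v \<noteq> 0} \<in> Kfaces W N" if x: "x \<in> KN_realization W N" for x
  proof -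
    have "{v. x v \<noteq> 0} \<subseteq> Kverts W N" "\<forall>i<length N. \<not> Ntilde N i \<subseteq> {v. x v \<noteq> 0}"
      using realizationD(4)[OF x] unfolding Kfaces_def by auto
    moreover have "Inl w0 \<notin> Ntilde N i" if "i < length N" for i
      using w0_notin[OF that] by (auto simp: Ntilde_def)
    ultimately show ?thesis
      using w0V unfolding support Kfaces_def by auto
  qed
  have contract: "homotopic_with (\<lambda>_. True) (KN_space W N) (KN_space W N) (\<lambda>_. vertex) id"
    unfolding KN_space_def
  proof (rule homotopic_with_straight_line_id)
    fix x and t :: real
    assume x: "x \<in> KN_realization W N" and t: "0 \<le> t" "t \<le> 1"
    show "(\<lambda>v. (1 - t) * vertex v + t * x v) \<in> KN_realization W N"
      by (rule realization_convex_combination[OF vertex_in x t Kfaces_downward_closed cone[OF x]])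
  qed simp
  have "retraction_maps (KN_space W N) (subtopology euclideanreal {0}) (\<lambda>_. 0) (\<lambda>_. vertex)"
    unfolding retraction_maps_def
  proof (intro conjI ballI)
    show "continuous_map (KN_space W N) (subtopology euclideanreal {0}) (\<lambda>_. 0::real)"
      by (simp add: continuous_map_in_subtopology)
    show "continuous_map (subtopology euclideanreal {0}) (KN_space W N) (\<lambda>_. vertex)"
      using vertex_in by simp
  qed simp
  then show ?thesis
    by (rule deformation_retraction_imp_homotopy_equivalent_space[rotated]) (simp add: contract)
qed

section \<open>The complex \<open>K(W, \<dots>, W)\<close> is a sphere\<close>

lemma continuous_map_Max:
  assumes "finite I" "I \<noteq> {}" "\<And>i. i \<in> I \<Longrightarrow> continuous_map Z euclideanreal (f i)"
  shows "continuous_map Z euclideanreal (\<lambda>z. Max ((\<lambda>i. f i z) ` I))"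
  using assms
proof (induction I rule: finite_ne_induct)
  case (insert x F)
  have "continuous_map Z euclideanreal (\<lambda>z. max (f x z) (Max ((\<lambda>i. f i z) ` F)))"
    using insert by (intro continuous_map_real_max) auto
  then show ?case
    using insert by (simp add: Max_insert)
qed simp

text \<open>Collapsing all points \<open>a\<^sub>i\<close> onto \<open>a\<^sub>0\<close> deforms \<open>|K(W, \<dots>, W)|\<close> onto the boundary of the
  \<open>n\<close>-simplex spanned by \<open>W \<union> {a\<^sub>0}\<close>, where \<open>n = |W|\<close>. In the coordinates \<open>x\<^sub>w\<close>, \<open>w \<in> W\<close>, listed
  by a bijection \<open>e\<close> from \<open>{..<n}\<close> to \<open>W\<close>, the map \<open>to_sphere\<close> is the radial projection of that
  boundary from the barycentre, all of whose coordinates are \<open>centre_weight n\<close>, to the unit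
  sphere. Its inverse \<open>from_sphere\<close> rescales by \<open>simplex_gauge\<close>, the gauge function of the simplex
  \<open>{y. \<forall>k. -1 \<le> y\<^sub>k, \<Sum>k. y\<^sub>k \<le> 1}\<close>, which is the simplex moved to the barycentre and scaled by
  \<open>1 / centre_weight n\<close>.\<close>

definition centre_weight :: "nat \<Rightarrow> real" where
  "centre_weight n = 1 / (real n + 1)"

definition centre_dist :: "(nat \<Rightarrow> 'w) \<Rightarrow> nat \<Rightarrow> ('w + nat \<Rightarrow> real) \<Rightarrow> real" where
  "centre_dist e n x = sqrt (\<Sum>k<n. (x (Inl (e k)) - centre_weight n)^2)"

definition to_sphere :: "(nat \<Rightarrow> 'w) \<Rightarrow> nat \<Rightarrow> ('w + nat \<Rightarrow> real) \<Rightarrow> nat \<Rightarrow> real" where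
  "to_sphere e n x k = (if k < n then (x (Inl (e k)) - centre_weight n) / centre_dist e n x else 0)"

definition simplex_gauge :: "nat \<Rightarrow> (nat \<Rightarrow> real) \<Rightarrow> real" where
  "simplex_gauge n u = max (\<Sum>k<n. u k) (Max ((\<lambda>k. - u k) ` {..<n}))"

definition from_sphere :: "'w set \<Rightarrow> (nat \<Rightarrow> 'w) \<Rightarrow> nat \<Rightarrow> (nat \<Rightarrow> real) \<Rightarrow> 'w + nat \<Rightarrow> real" where
  "from_sphere W e n u v = (case v of
      Inl w \<Rightarrow> if w \<in> W then centre_weight n * (1 + u (inv_into {..<n} e w) / simplex_gauge n u) else 0
    | Inr i \<Rightarrow> if i = 0 then centre_weight n * (1 - (\<Sum>k<n. u k) / simplex_gauge n u) else 0)"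

definition collapse_apices :: "nat \<Rightarrow> ('w + nat \<Rightarrow> real) \<Rightarrow> 'w + nat \<Rightarrow> real" where
  "collapse_apices r x v = (case v of Inl w \<Rightarrow> x (Inl w) | Inr i \<Rightarrow> if i = 0 then apex_mass r x else 0)"

lemma centre_weight_pos: "0 < centre_weight n"
  by (simp add: centre_weight_def)

lemma centre_weight_complement: "1 - real n * centre_weight n = centre_weight n"
  by (simp add: centre_weight_def field_simps)

lemma simplex_gauge_ge_neg: "k < n \<Longrightarrow> - u k \<le> simplex_gauge n u"
  unfolding simplex_gauge_def by (rule max.coboundedI2, rule Max_ge) auto

lemma simplex_gauge_ge_sum: "(\<Sum>k<n. u k) \<le> simplex_gauge n u"
  unfolding simplex_gauge_def by simp

context
  fixes n :: nat
  assumes n_pos: "0 < n"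
begin

lemma topspace_nsphere_pred:
  "topspace (nsphere (n - 1)) = {u. (\<Sum>k<n. u k ^ 2) = 1 \<and> (\<forall>k\<ge>n. u k = 0)}"
proof -
  have "{..n - 1} = {..<n}" "\<And>k. n - 1 < k \<longleftrightarrow> n \<le> k" using n_pos by auto
  then show ?thesis unfolding nsphere by simp
qed

lemma simplex_gauge_attained:
  assumes "(\<Sum>k<n. u k) < simplex_gauge n u"
  shows "\<exists>k<n. - u k = simplex_gauge n u"
proof -
  have "simplex_gauge n u = Max ((\<lambda>k. - u k) ` {..<n})"
    using assms unfolding simplex_gauge_def by (simp add: max_def split: if_splits)
  moreover have "Max ((\<lambda>k. - u k) ` {..<n}) \<in> (\<lambda>k. - u k) ` {..<n}"
    using n_pos by (intro Max_in) auto
  ultimately show ?thesis by auto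
qed

lemma simplex_gauge_eqI:
  assumes "\<And>k. k < n \<Longrightarrow> - u k \<le> a" "(\<Sum>k<n. u k) \<le> a" "(\<Sum>k<n. u k) = a \<or> (\<exists>k<n. - u k = a)"
  shows "simplex_gauge n u = a"
proof -
  have le: "Max ((\<lambda>k. - u k) ` {..<n}) \<le> a"
    using assms(1) n_pos by (subst Max_le_iff) auto
  show ?thesis
  proof (cases "(\<Sum>k<n. u k) = a")
    case True
    then show ?thesis using le unfolding simplex_gauge_def by simp
  next
    case False
    then obtain k where "k < n" "- u k = a" using assms(3) by auto
    then have "Max ((\<lambda>k. - u k) ` {..<n}) \<ge> a"
      by (metis Max_ge finite_imageI finite_lessThan imageI lessThan_iff)
    then have "Max ((\<lambda>k. - u k) ` {..<n}) = a" using le by simp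
    then show ?thesis using assms(2) unfolding simplex_gauge_def by simp
  qed
qed

lemma simplex_gauge_pos:
  assumes u: "u \<in> topspace (nsphere (n - 1))"
  shows "0 < simplex_gauge n u"
proof (rule ccontr)
  assume "\<not> 0 < simplex_gauge n u"
  then have nonneg: "0 \<le> u k" if "k < n" for k
    using simplex_gauge_ge_neg[OF that, where u=u] by linarith
  have "(\<Sum>k<n. u k) \<le> 0"
    using \<open>\<not> 0 < simplex_gauge n u\<close> simplex_gauge_ge_sum[where n=n and u=u] by linarith
  then have "(\<Sum>k<n. u k) = 0"
    using nonneg by (intro order_antisym sum_nonneg) auto
  then have "\<forall>k\<in>{..<n}. u k = 0"
    using nonneg by (subst sum_nonneg_eq_0_iff[symmetric]) auto
  then show False
    using u unfolding topspace_nsphere_pred by simp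
qed

lemma continuous_map_simplex_gauge: "continuous_map (nsphere (n - 1)) euclideanreal (simplex_gauge n)"
proof -
  have "continuous_map (nsphere (n - 1)) euclideanreal
          (\<lambda>u. max (\<Sum>k<n. u k) (Max ((\<lambda>k. - u k) ` {..<n})))"
    using n_pos
    by (intro continuous_map_real_max continuous_map_sum continuous_map_Max continuous_intros
              continuous_map_nsphere_projection) auto
  then show ?thesis
    by (simp add: simplex_gauge_def[abs_def])
qed

end

context
  fixes W :: "'w set" and e :: "nat \<Rightarrow> 'w" and n r :: nat
  assumes fin: "finite W" and bij: "bij_betw e {..<n} W" and n_pos: "0 < n" and r_pos: "0 < r"
begin

lemma e_in_W: "k < n \<Longrightarrow> e k \<in> W"
  using bij by (auto simp: bij_betw_def)

lemma inv_e_less: "w \<in> W \<Longrightarrow> inv_into {..<n} e w < n"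
  using bij by (metis bij_betw_def inv_into_into lessThan_iff)

lemma e_inv_e: "w \<in> W \<Longrightarrow> e (inv_into {..<n} e w) = w"
  using bij by (simp add: bij_betw_inv_into_right)

lemma inv_e_e: "k < n \<Longrightarrow> inv_into {..<n} e (e k) = k"
  using bij by (simp add: bij_betw_inv_into_left)

lemma sum_W_reindex: "(\<Sum>w\<in>W. h w) = (\<Sum>k<n. h (e k))"
  by (rule sum.reindex_bij_betw[OF bij, symmetric])

lemma replicate_Kfaces_intro:
  assumes "F \<subseteq> Kverts W (replicate r W)" "\<And>i. i < r \<Longrightarrow> Inr i \<in> F \<Longrightarrow> \<exists>w\<in>W. Inl w \<notin> F"
  shows "F \<in> Kfaces W (replicate r W)"
  unfolding Kfaces_def Ntilde_def using assms by fastforce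

lemma replicate_realization_sum:
  assumes "x \<in> KN_realization W (replicate r W)"
  shows "(\<Sum>k<n. x (Inl (e k))) + apex_mass r x = 1"
  using KN_realization_sum[OF fin assms] by (simp add: sum_W_reindex)

lemma replicate_realization_zero:
  assumes "x \<in> KN_realization W (replicate r W)" "0 < apex_mass r x"
  shows "\<exists>k<n. x (Inl (e k)) = 0"
  using KN_realization_apex_mass_pos[of x W "replicate r W"] assms inv_e_less e_inv_e by force

lemma centre_dist_pos:
  assumes x: "x \<in> KN_realization W (replicate r W)"
  shows "0 < centre_dist e n x"
proof (rule ccontr)
  assume "\<not> 0 < centre_dist e n x"
  moreover have "0 \<le> (\<Sum>k<n. (x (Inl (e k)) - centre_weight n)^2)"
    by (simp add: sum_nonneg)
  ultimately have "(\<Sum>k<n. (x (Inl (e k)) - centre_weight n)^2) = 0"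
    unfolding centre_dist_def by simp
  then have centre: "x (Inl (e k)) = centre_weight n" if "k < n" for k
    using that by (subst (asm) sum_nonneg_eq_0_iff) auto
  then have "apex_mass r x = 0"
    using replicate_realization_zero[OF x] apex_mass_nonneg[OF x, of r] centre_weight_pos[of n]
    by fastforce
  then have "real n * centre_weight n = 1"
    using replicate_realization_sum[OF x] centre by simp
  then show False
    using centre_weight_complement[of n] centre_weight_pos[of n] by simp
qed

lemma to_sphere_in_nsphere:
  assumes x: "x \<in> KN_realization W (replicate r W)"
  shows "to_sphere e n x \<in> topspace (nsphere (n - 1))"
proof -
  let ?d = "\<Sum>k<n. (x (Inl (e k)) - centre_weight n)^2"
  have "(centre_dist e n x)^2 = ?d" and "?d \<noteq> 0"
    using centre_dist_pos[OF x] unfolding centre_dist_def by (auto simp: sum_nonneg)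
  then have "(\<Sum>k<n. to_sphere e n x k ^ 2) = 1"
    by (simp add: to_sphere_def power_divide sum_divide_distrib[symmetric])
  then show ?thesis
    unfolding topspace_nsphere_pred[OF n_pos] by (simp add: to_sphere_def)
qed

lemma from_sphere_Inl_e:
  "k < n \<Longrightarrow> from_sphere W e n u (Inl (e k)) = centre_weight n * (1 + u k / simplex_gauge n u)"
  by (simp add: from_sphere_def e_in_W inv_e_e)

lemma from_sphere_in_KN_realization:
  assumes u: "u \<in> topspace (nsphere (n - 1))"
  shows "from_sphere W e n u \<in> KN_realization W (replicate r W)"
proof -
  let ?g = "from_sphere W e n u" and ?m = "simplex_gauge n u"
  have m: "0 < ?m" using simplex_gauge_pos[OF n_pos u] .
  have coord_nonneg: "0 \<le> 1 + u k / ?m" if "k < n" for k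
    using simplex_gauge_ge_neg[OF that, where u=u] m by (simp add: field_simps)
  have apex_nonneg: "0 \<le> 1 - (\<Sum>k<n. u k) / ?m"
    using simplex_gauge_ge_sum[where n=n and u=u] m by (simp add: field_simps)
  show ?thesis
  proof (rule realizationI)
    show "0 \<le> ?g v" for v
      using coord_nonneg apex_nonneg inv_e_less centre_weight_pos[of n]
      by (cases v) (auto simp: from_sphere_def)
    show "?g v = 0" if "v \<notin> Kverts W (replicate r W)" for v
      using that r_pos by (cases v) (auto simp: from_sphere_def Kverts_def)
    have "sum ?g (Kverts W (replicate r W))
        = centre_weight n * ((\<Sum>k<n. 1 + u k / ?m) + (1 - (\<Sum>k<n. u k) / ?m))"
      using r_pos
      by (simp add: sum_Kverts[OF fin] sum_W_reindex from_sphere_Inl_e sum_distrib_left distrib_left)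
         (simp add: from_sphere_def)
    also have "\<dots> = 1"
      using centre_weight_complement[of n]
      by (simp add: sum.distrib sum_divide_distrib[symmetric] algebra_simps)
    finally show "sum ?g (Kverts W (replicate r W)) = 1" .
    show "{v. ?g v \<noteq> 0} \<in> Kfaces W (replicate r W)"
    proof (rule replicate_Kfaces_intro)
      show "{v. ?g v \<noteq> 0} \<subseteq> Kverts W (replicate r W)"
      proof
        fix v assume "v \<in> {v. ?g v \<noteq> 0}"
        then show "v \<in> Kverts W (replicate r W)"
          using r_pos by (cases v) (auto simp: from_sphere_def Kverts_def split: if_splits)
      qed
    next
      fix i assume "i < r" "Inr i \<in> {v. ?g v \<noteq> 0}"
      then have "(\<Sum>k<n. u k) \<noteq> ?m"
        using m by (auto simp: from_sphere_def split: if_splits)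
      then obtain k where k: "k < n" "- u k = ?m"
        using simplex_gauge_attained[OF n_pos] simplex_gauge_ge_sum[where n=n and u=u] by force
      then have "u k = - ?m" by simp
      then have "u k / ?m = -1" using m by simp
      then have "?g (Inl (e k)) = 0"
        using k by (simp add: from_sphere_Inl_e)
      then show "\<exists>w\<in>W. Inl w \<notin> {v. ?g v \<noteq> 0}"
        using e_in_W k by auto
    qed
  qed
qed

lemma to_sphere_from_sphere:
  assumes u: "u \<in> topspace (nsphere (n - 1))"
  shows "to_sphere e n (from_sphere W e n u) = u"
proof
  let ?m = "simplex_gauge n u" and ?c = "centre_weight n"
  have m: "0 < ?m" using simplex_gauge_pos[OF n_pos u] .
  have c: "0 < ?c" by (rule centre_weight_pos)
  have u_sphere: "(\<Sum>k<n. u k ^ 2) = 1" "\<And>k. n \<le> k \<Longrightarrow> u k = 0"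
    using u unfolding topspace_nsphere_pred[OF n_pos] by auto
  have diff: "from_sphere W e n u (Inl (e k)) - ?c = ?c / ?m * u k" if "k < n" for k
    using that by (simp add: from_sphere_Inl_e algebra_simps)
  have "centre_dist e n (from_sphere W e n u) = sqrt ((?c / ?m)^2 * (\<Sum>k<n. u k ^ 2))"
    unfolding centre_dist_def
    by (simp add: diff sum_distrib_left sum_divide_distrib power2_eq_square algebra_simps)
  also have "\<dots> = ?c / ?m"
    using c m u_sphere(1) by simp
  finally have dist: "centre_dist e n (from_sphere W e n u) = ?c / ?m" .
  fix k
  show "to_sphere e n (from_sphere W e n u) k = u k"
    using c m u_sphere(2)[of k] by (simp add: to_sphere_def diff dist)
qed

lemma simplex_gauge_to_sphere:
  assumes x: "x \<in> KN_realization W (replicate r W)"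
  shows "simplex_gauge n (to_sphere e n x) = centre_weight n / centre_dist e n x"
proof -
  let ?d = "centre_dist e n x" and ?s = "apex_mass r x" and ?c = "centre_weight n"
  have d: "0 < ?d" using centre_dist_pos[OF x] .
  have coord: "to_sphere e n x k = (x (Inl (e k)) - ?c) / ?d" if "k < n" for k
    using that by (simp add: to_sphere_def)
  have "(\<Sum>k<n. x (Inl (e k)) - ?c) = ?c - ?s"
    using replicate_realization_sum[OF x] centre_weight_complement[of n] by (simp add: sum_subtractf)
  then have sum: "(\<Sum>k<n. to_sphere e n x k) = (?c - ?s) / ?d"
    by (simp add: coord sum_divide_distrib[symmetric])
  show ?thesis
  proof (rule simplex_gauge_eqI[OF n_pos])
    show "- to_sphere e n x k \<le> ?c / ?d" if "k < n" for k
      using that d realizationD(1)[OF x, of "Inl (e k)"]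
      by (simp add: coord minus_divide_left divide_right_mono)
    show "(\<Sum>k<n. to_sphere e n x k) \<le> ?c / ?d"
      using sum d apex_mass_nonneg[OF x, of r] by (simp add: divide_right_mono)
    show "(\<Sum>k<n. to_sphere e n x k) = ?c / ?d \<or> (\<exists>k<n. - to_sphere e n x k = ?c / ?d)"
    proof (cases "?s = 0")
      case True
      then show ?thesis using sum by simp
    next
      case False
      then obtain k where "k < n" "x (Inl (e k)) = 0"
        using replicate_realization_zero[OF x] apex_mass_nonneg[OF x, of r] by fastforce
      then show ?thesis
        by (auto simp: coord minus_divide_left)
    qed
  qed
qed

lemma from_sphere_to_sphere:
  assumes x: "x \<in> KN_realization W (replicate r W)"
  shows "from_sphere W e n (to_sphere e n x) = collapse_apices r x"
proof
  let ?d = "centre_dist e n x" and ?s = "apex_mass r x" and ?c = "centre_weight n"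
  have d: "0 < ?d" and c: "0 < ?c"
    using centre_dist_pos[OF x] centre_weight_pos by auto
  have ratio: "to_sphere e n x k / simplex_gauge n (to_sphere e n x) = (x (Inl (e k)) - ?c) / ?c"
    if "k < n" for k
    using that d by (simp add: simplex_gauge_to_sphere[OF x] to_sphere_def)
  fix v
  show "from_sphere W e n (to_sphere e n x) v = collapse_apices r x v"
  proof (cases v)
    case (Inl w)
    show ?thesis
    proof (cases "w \<in> W")
      case True
      then show ?thesis
        using Inl ratio[OF inv_e_less[OF True]] c
        by (simp add: from_sphere_def collapse_apices_def e_inv_e field_simps)
    next
      case False
      then show ?thesis
        using Inl realizationD(2)[OF x, of v] by (auto simp: from_sphere_def collapse_apices_def Kverts_def)
    qed
  next
    case (Inr i)
    have "(\<Sum>k<n. to_sphere e n x k) / simplex_gauge n (to_sphere e n x) = (\<Sum>k<n. x (Inl (e k)) - ?c) / ?c"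
      using ratio by (simp add: sum_divide_distrib)
    also have "\<dots> = (?c - ?s) / ?c"
      using replicate_realization_sum[OF x] centre_weight_complement[of n] by (simp add: sum_subtractf)
    finally show ?thesis
      using Inr c by (simp add: from_sphere_def collapse_apices_def field_simps)
  qed
qed

lemma collapse_apices_support:
  assumes x: "x \<in> KN_realization W (replicate r W)"
  shows "{v. collapse_apices r x v \<noteq> 0} \<union> {v. x v \<noteq> 0} \<in> Kfaces W (replicate r W)"
proof (rule replicate_Kfaces_intro)
  show "{v. collapse_apices r x v \<noteq> 0} \<union> {v. x v \<noteq> 0} \<subseteq> Kverts W (replicate r W)"
  proof
    fix v assume "v \<in> {v. collapse_apices r x v \<noteq> 0} \<union> {v. x v \<noteq> 0}"
    then show "v \<in> Kverts W (replicate r W)"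
      using realizationD(2)[OF x] r_pos
      by (cases v) (auto simp: collapse_apices_def Kverts_def split: if_splits)
  qed
next
  fix i assume i: "i < r" "Inr i \<in> {v. collapse_apices r x v \<noteq> 0} \<union> {v. x v \<noteq> 0}"
  have "\<exists>w\<in>W. x (Inl w) = 0"
  proof (cases "x (Inr i) = 0")
    case True
    then have "0 < apex_mass r x"
      using i apex_mass_nonneg[OF x, of r] by (auto simp: collapse_apices_def split: if_splits)
    then show ?thesis
      using replicate_realization_zero[OF x] e_in_W by blast
  next
    case False
    then show ?thesis
      using KN_realization_apex_nonzero[OF x] i by simp
  qed
  then show "\<exists>w\<in>W. Inl w \<notin> {v. collapse_apices r x v \<noteq> 0} \<union> {v. x v \<noteq> 0}"
    by (auto simp: collapse_apices_def)
qed

lemma collapse_apices_in_KN_realization: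
  assumes x: "x \<in> KN_realization W (replicate r W)"
  shows "collapse_apices r x \<in> KN_realization W (replicate r W)"
proof (rule realizationI)
  show "0 \<le> collapse_apices r x v" for v
    using realizationD(1)[OF x] apex_mass_nonneg[OF x] by (cases v) (auto simp: collapse_apices_def)
  show "collapse_apices r x v = 0" if "v \<notin> Kverts W (replicate r W)" for v
    using that realizationD(2)[OF x] r_pos by (cases v) (auto simp: collapse_apices_def Kverts_def)
  show "sum (collapse_apices r x) (Kverts W (replicate r W)) = 1"
    using KN_realization_sum[OF fin x] r_pos by (simp add: sum_Kverts[OF fin] collapse_apices_def)
  show "{v. collapse_apices r x v \<noteq> 0} \<in> Kfaces W (replicate r W)"
    using Kfaces_downward_closed[OF collapse_apices_support[OF x]] by blast
qed

lemma collapse_apices_homotopic_id: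
  "homotopic_with (\<lambda>_. True) (KN_space W (replicate r W)) (KN_space W (replicate r W)) (collapse_apices r) id"
  unfolding KN_space_def
proof (rule homotopic_with_straight_line_id)
  fix v
  show "continuous_map (geom_real (Kverts W (replicate r W)) (Kfaces W (replicate r W))) euclideanreal
          (\<lambda>x. collapse_apices r x v)"
  proof (cases v)
    case (Inl w)
    then show ?thesis
      by (simp add: collapse_apices_def continuous_map_geom_real_coordinate)
  next
    case (Inr i)
    then show ?thesis
      by (cases "i = 0") (simp_all add: collapse_apices_def continuous_map_apex_mass
                                        continuous_map_geom_real_coordinate)
  qed
next
  fix x and t :: real
  assume x: "x \<in> KN_realization W (replicate r W)" and t: "0 \<le> t" "t \<le> 1"
  show "(\<lambda>v. (1 - t) * collapse_apices r x v + t * x v) \<in> KN_realization W (replicate r W)"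
    by (rule realization_convex_combination[OF collapse_apices_in_KN_realization[OF x] x t
          Kfaces_downward_closed collapse_apices_support[OF x]])
qed

lemma continuous_map_into_nsphere:
  assumes "\<And>k. continuous_map Z euclideanreal (\<lambda>p. h p k)"
    and "\<And>p. p \<in> topspace Z \<Longrightarrow> h p \<in> topspace (nsphere m)"
  shows "continuous_map Z (nsphere m) h"
  using assms unfolding nsphere
  by (auto simp: continuous_map_in_subtopology continuous_map_componentwise_UNIV)

lemma continuous_map_to_sphere:
  "continuous_map (KN_space W (replicate r W)) (nsphere (n - 1)) (to_sphere e n)"
proof (rule continuous_map_into_nsphere)
  fix k
  have "continuous_map (KN_space W (replicate r W)) euclideanreal
          (\<lambda>x. (x (Inl (e k)) - centre_weight n) / centre_dist e n x)"
    unfolding centre_dist_def KN_space_def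
  proof (intro continuous_map_real_divide continuous_intros continuous_map_geom_real_coordinate)
    show "sqrt (\<Sum>k<n. (x (Inl (e k)) - centre_weight n)^2) \<noteq> 0"
      if "x \<in> topspace (geom_real (Kverts W (replicate r W)) (Kfaces W (replicate r W)))" for x
      using centre_dist_pos[of x] that by (simp add: centre_dist_def)
  qed auto
  then show "continuous_map (KN_space W (replicate r W)) euclideanreal (\<lambda>x. to_sphere e n x k)"
    by (simp add: to_sphere_def)
qed (use to_sphere_in_nsphere in simp)

lemma continuous_map_from_sphere:
  "continuous_map (nsphere (n - 1)) (KN_space W (replicate r W)) (from_sphere W e n)"
  unfolding KN_space_def
proof (rule continuous_map_into_geom_real)
  fix v
  have gauge_nonzero: "\<And>u. u \<in> topspace (nsphere (n - 1)) \<Longrightarrow> simplex_gauge n u \<noteq> 0"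
    using simplex_gauge_pos[OF n_pos] by force
  show "continuous_map (nsphere (n - 1)) euclideanreal (\<lambda>u. from_sphere W e n u v)"
    unfolding from_sphere_def
    by (cases v)
       (auto intro!: continuous_intros continuous_map_real_divide continuous_map_simplex_gauge[OF n_pos, unfolded One_nat_def]
                     continuous_map_nsphere_projection gauge_nonzero)
qed (use from_sphere_in_KN_realization in simp)

lemma KN_space_replicate_homotopy_equivalent_nsphere:
  "KN_space W (replicate r W) homotopy_equivalent_space nsphere (n - 1)"
proof (rule deformation_retraction_imp_homotopy_equivalent_space)
  show "homotopic_with (\<lambda>_. True) (KN_space W (replicate r W)) (KN_space W (replicate r W))
          (from_sphere W e n \<circ> to_sphere e n) id"
    by (rule homotopic_with_eq[OF collapse_apices_homotopic_id]) (auto simp: from_sphere_to_sphere)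
  show "retraction_maps (KN_space W (replicate r W)) (nsphere (n - 1)) (to_sphere e n) (from_sphere W e n)"
    unfolding retraction_maps_def
    using continuous_map_to_sphere continuous_map_from_sphere to_sphere_from_sphere by blast
qed

end

lemma KN_space_empty_ground:
  assumes "\<forall>i<length N. N!i \<subseteq> {}"
  shows "KN_space {} N = trivial_topology"
proof -
  have "x \<notin> KN_realization {} N" for x
  proof
    assume x: "x \<in> KN_realization {} N"
    obtain v where v: "v \<in> Kverts {} N" "x v \<noteq> 0"
      using realizationD(3)[OF x] by (metis sum.neutral zero_neq_one)
    then obtain i where i: "i < length N" "v = Inr i" by (auto simp: Kverts_def)
    then have "Ntilde N i = {Inr i}" using assms by (auto simp: Ntilde_def)
    then show False using realizationD(4)[OF x] i v unfolding Kfaces_def by auto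
  qed
  then have "topspace (KN_space {} N) = {}"
    by auto
  then show ?thesis
    using null_topspace_iff_trivial by blast
qed

theorem KN_space_homotopy_equivalent_sphere:
  assumes fin: "finite W" and NW: "\<forall>i<length N. N!i \<subseteq> W" and cover: "\<Union>(set N) = W"
  shows "KN_space W N homotopy_equivalent_space sphere_top (int (card W) - 1)"
proof (cases "W = {}")
  case True
  then have "KN_space W N = trivial_topology" "sphere_top (int (card W) - 1) = trivial_topology"
    using KN_space_empty_ground NW by (auto simp: sphere_top_def)
  then show ?thesis
    unfolding homotopy_equivalent_space_def by (intro exI conjI homotopic_with_equal) simp_all
next
  case False
  define n r where "n = card W" and "r = length N"
  have n_pos: "0 < n" using False fin by (simp add: n_def card_gt_0_iff)
  have r_pos: "0 < r" using False cover by (cases N) (auto simp: r_def)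
  obtain e where e: "bij_betw e {..<n} W"
    using ex_bij_betw_nat_finite[OF fin] by (auto simp: n_def atLeast0LessThan)
  have "homotopy_equivalence_map (KN_space W N) (KN_space W (replicate r W)) id"
    using homotopy_equivalence_map_KN_space_inclusion[OF fin _ _ _ cover, of "replicate r W"] NW
    by (simp add: r_def)
  then have "KN_space W N homotopy_equivalent_space KN_space W (replicate r W)"
    unfolding homotopy_equivalence_map_def homotopy_equivalent_space_def by blast
  also have "\<dots> homotopy_equivalent_space nsphere (n - 1)"
    by (rule KN_space_replicate_homotopy_equivalent_nsphere[OF fin e n_pos r_pos])
  also have "nsphere (n - 1) = sphere_top (int (card W) - 1)"
    using n_pos by (simp add: sphere_top_def n_def nat_diff_distrib)
  finally show ?thesis .
qed

theorem proposition4p2: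
  fixes W :: "'w set" and N M :: "'w set list"
  assumes "finite W" and "\<forall>i<length N. N ! i \<subseteq> W"
  shows "(\<Union>(set N) = W \<longrightarrow>
            KN_space W N homotopy_equivalent_space sphere_top (int (card W) - 1))
       \<and> (\<Union>(set N) \<noteq> W \<longrightarrow>
            KN_space W N homotopy_equivalent_space subtopology euclideanreal {0})
       \<and> ((length M = length N \<and> (\<forall>i<length N. M ! i \<subseteq> N ! i) \<and> \<Union>(set M) = W) \<longrightarrow>
            topspace (KN_space W M) \<subseteq> topspace (KN_space W N)
            \<and> homotopy_equivalence_map (KN_space W M) (KN_space W N) id)"
  using KN_space_homotopy_equivalent_sphere[OF assms] KN_space_homotopy_equivalent_point[OF assms]
    homotopy_equivalence_map_KN_space_inclusion[OF assms(1) _ _ assms(2)]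
  by (intro conjI impI) auto

end
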